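(* Let $\alpha$ be a proper fraction ($0<\alpha<1$), let $u=(u_k)$ be a sequence with $u_k\neq 0$ for all $k$, let $\lambda$ be any sequence space and $\mu\in\{c_0,c\}$. Let $A=(a_{nk})$ be an infinite matrix and let $B=(b_{nk})$ be given by $$b_{nk}=\sum_{j=0}^n\Big(\sum_{i=0}^{n-j}(-1)^i\frac{\Gamma(\alpha+1)}{i!\,\Gamma(\alpha+1-i)}u_{i+j}\Big)a_{jk}\qquad(n,k\in\mathbb{N}).$$ Then $A\in(\lambda:\mu(\Gamma,\Delta^{(\alpha)},u))$ if and only if $B\in(\lambda:\mu)$.
   Context: $\omega$ denotes the space of all real or complex sequences, $c$ the convergent sequences, $c_0$ the null sequences; $\mathbb{N}=\{0,1,2,\dots\}$; $\Gamma$ is the gamma function. For $x\in\omega$, $\Delta^{(\alpha)}x_k=\sum_{i=0}^{\infty}(-1)^i\frac{\Gamma(\alpha+1)}{i!\,\Gamma(\alpha+1-i)}x_{k-i}$ with $x_j=0$ for $j<0$. For $\mu\in\{c_0,c\}$, $\mu(\Gamma,\Delta^{(\alpha)},u)=\{x\in\omega:(\sum_{j=0}^k u_j\Delta^{(\alpha)}x_j)_k\in\mu\}$. For sequence spaces $X,Y$, $(X:Y)$ denotes the class of infinite matrices $A=(a_{nk})$ such that for every $x\in X$ the series $(Ax)_n=\sum_k a_{nk}x_k$ converges for each $n$ and $Ax=((Ax)_n)_n\in Y$. *)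

theory Defs
  imports "HOL-Analysis.Analysis"
begin

definition null_seqs :: "(nat \<Rightarrow> 'a::real_normed_vector) set" where
  "null_seqs = {x. x \<longlonglongrightarrow> 0}"

definition conv_seqs :: "(nat \<Rightarrow> 'a::real_normed_vector) set" where
  "conv_seqs = {x. convergent x}"

definition frac_coeff :: "real \<Rightarrow> nat \<Rightarrow> real" where
  "frac_coeff \<alpha> i = (-1) ^ i * Gamma (\<alpha> + 1) / (fact i * Gamma (\<alpha> + 1 - real i))"

text \<open>Fractional difference; since x_j = 0 for j < 0, the series
  reduces to the finite sum over i = 0..k.\<close>
definition frac_diff :: "real \<Rightarrow> (nat \<Rightarrow> 'a::real_normed_field) \<Rightarrow> nat \<Rightarrow> 'a" where
  "frac_diff \<alpha> x k = (\<Sum>i\<le>k. of_real (frac_coeff \<alpha> i) * x (k - i))"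

definition gamma_domain ::
  "(nat \<Rightarrow> 'a::real_normed_field) set \<Rightarrow> real \<Rightarrow> (nat \<Rightarrow> 'a) \<Rightarrow> (nat \<Rightarrow> 'a) set" where
  "gamma_domain \<mu> \<alpha> u = {x. (\<lambda>k. \<Sum>j\<le>k. u j * frac_diff \<alpha> x j) \<in> \<mu>}"

definition mat_class ::
  "(nat \<Rightarrow> 'a::real_normed_field) set \<Rightarrow> (nat \<Rightarrow> 'a) set \<Rightarrow> (nat \<Rightarrow> nat \<Rightarrow> 'a) set" where
  "mat_class X Y = {A. \<forall>x\<in>X. (\<forall>n. summable (\<lambda>k. A n k * x k)) \<and>
                         (\<lambda>n. \<Sum>k. A n k * x k) \<in> Y}"

end

theory Submission
  imports Defs
begin

text \<open>Interchanging the two finite sums shows that the weighted partial sums of the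
  fractional differences of \<open>x\<close> form \<open>T x\<close> for the triangle \<open>T\<close> whose rows are those of \<open>B\<close>
  without \<open>A\<close>; its diagonal is \<open>u\<^sub>n\<close> because the zeroth coefficient is 1. For any triangle
  \<open>T\<close>, the rows of \<open>Ax\<close> converge iff those of \<open>(TA)x\<close> do (solve for the diagonal entry,
  by induction on the row), and then \<open>T(Ax) = (TA)x\<close> since finite row combinations commute
  with the row series.\<close>

lemma sum_weighted_convolution_swap:
  fixes u y c :: "nat \<Rightarrow> 'a::comm_ring_1"
  shows "(\<Sum>j\<le>n. u j * (\<Sum>i\<le>j. c i * y (j - i))) = (\<Sum>m\<le>n. (\<Sum>i\<le>n - m. c i * u (i + m)) * y m)"
proof (induction n)
  case 0
  then show ?case by simp
next
  case (Suc n)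
  have inner_Suc: "(\<Sum>i\<le>Suc n - m. c i * u (i + m)) = (\<Sum>i\<le>n - m. c i * u (i + m)) + c (Suc n - m) * u (Suc n)"
    if "m \<le> n" for m
    using that by (simp add: Suc_diff_le)
  have reflect: "(\<Sum>i\<le>Suc n. c i * y (Suc n - i)) = (\<Sum>m\<le>Suc n. c (Suc n - m) * y m)"
    by (rule sum.reindex_bij_witness[where i="\<lambda>m. Suc n - m" and j="\<lambda>m. Suc n - m"]) auto
  have "(\<Sum>m\<le>Suc n. (\<Sum>i\<le>Suc n - m. c i * u (i + m)) * y m)
      = (\<Sum>m\<le>n. (\<Sum>i\<le>Suc n - m. c i * u (i + m)) * y m) + c 0 * u (Suc n) * y (Suc n)"
    by simp
  also have "\<dots> = (\<Sum>m\<le>n. (\<Sum>i\<le>n - m. c i * u (i + m)) * y m)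
      + (\<Sum>m\<le>n. c (Suc n - m) * u (Suc n) * y m) + c 0 * u (Suc n) * y (Suc n)"
    by (simp add: inner_Suc distrib_right sum.distrib)
  also have "\<dots> = (\<Sum>m\<le>n. (\<Sum>i\<le>n - m. c i * u (i + m)) * y m)
      + u (Suc n) * (\<Sum>m\<le>Suc n. c (Suc n - m) * y m)"
    by (simp add: sum_distrib_left algebra_simps)
  finally show ?case
    using Suc reflect by simp
qed

lemma summable_row_combination:
  fixes A :: "nat \<Rightarrow> nat \<Rightarrow> 'a::real_normed_field"
  assumes "\<And>j. summable (\<lambda>k. A j k * x k)"
  shows "summable (\<lambda>k. (\<Sum>j\<le>n. d j * A j k) * x k)"
    and "(\<Sum>k. (\<Sum>j\<le>n. d j * A j k) * x k) = (\<Sum>j\<le>n. d j * (\<Sum>k. A j k * x k))"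
proof -
  have distrib: "(\<lambda>k. (\<Sum>j\<le>n. d j * A j k) * x k) = (\<lambda>k. \<Sum>j\<le>n. d j * (A j k * x k))"
    by (simp add: sum_distrib_right mult.assoc)
  have summable_terms: "\<And>j. summable (\<lambda>k. d j * (A j k * x k))"
    using assms by (intro summable_mult)
  show "summable (\<lambda>k. (\<Sum>j\<le>n. d j * A j k) * x k)"
    unfolding distrib by (intro summable_sum summable_terms)
  show "(\<Sum>k. (\<Sum>j\<le>n. d j * A j k) * x k) = (\<Sum>j\<le>n. d j * (\<Sum>k. A j k * x k))"
  proof -
    have "(\<Sum>k. \<Sum>j\<le>n. d j * (A j k * x k)) = (\<Sum>j\<le>n. \<Sum>k. d j * (A j k * x k))"
      using summable_terms by (rule suminf_sum)
    then show ?thesis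
      unfolding distrib using assms by (simp add: suminf_mult)
  qed
qed

lemma summable_rows_of_triangle_factor:
  fixes A D :: "nat \<Rightarrow> nat \<Rightarrow> 'a::real_normed_field"
  assumes "\<And>n. summable (\<lambda>k. (\<Sum>j\<le>n. D n j * A j k) * x k)"
    and "\<And>n. D n n \<noteq> 0"
  shows "summable (\<lambda>k. A n k * x k)"
proof (induction n rule: less_induct)
  case (less n)
  have solve_diagonal: "(\<lambda>k. A n k * x k) =
      (\<lambda>k. ((\<Sum>j\<le>n. D n j * A j k) * x k - (\<Sum>j<n. D n j * (A j k * x k))) / D n n)"
  proof
    fix k
    have "(\<Sum>j\<le>n. D n j * A j k) = (\<Sum>j<n. D n j * A j k) + D n n * A n k"
      by (simp flip: lessThan_Suc_atMost)
    then show "A n k * x k = ((\<Sum>j\<le>n. D n j * A j k) * x k - (\<Sum>j<n. D n j * (A j k * x k))) / D n n"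
      using assms(2)[of n] by (simp add: field_simps sum_distrib_left sum_distrib_right mult.assoc)
  qed
  have "summable (\<lambda>k. \<Sum>j<n. D n j * (A j k * x k))"
    using less by (intro summable_sum summable_mult) auto
  then show ?case
    unfolding solve_diagonal using assms(1) by (intro summable_divide summable_diff)
qed

lemma mat_class_triangle_domain_iff:
  fixes A D :: "nat \<Rightarrow> nat \<Rightarrow> 'a::real_normed_field"
  assumes "\<And>n. D n n \<noteq> 0"
  shows "A \<in> mat_class X {y. (\<lambda>n. \<Sum>j\<le>n. D n j * y j) \<in> Y} \<longleftrightarrow>
         (\<lambda>n k. \<Sum>j\<le>n. D n j * A j k) \<in> mat_class X Y"
proof -
  have rowwise: "(\<forall>n. summable (\<lambda>k. A n k * x k)) \<and> (\<lambda>n. \<Sum>j\<le>n. D n j * (\<Sum>k. A j k * x k)) \<in> Y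
    \<longleftrightarrow> (\<forall>n. summable (\<lambda>k. (\<Sum>j\<le>n. D n j * A j k) * x k))
        \<and> (\<lambda>n. \<Sum>k. (\<Sum>j\<le>n. D n j * A j k) * x k) \<in> Y" for x
  proof -
    have "(\<forall>n. summable (\<lambda>k. A n k * x k)) \<longleftrightarrow> (\<forall>n. summable (\<lambda>k. (\<Sum>j\<le>n. D n j * A j k) * x k))"
    proof
      show "\<forall>n. summable (\<lambda>k. (\<Sum>j\<le>n. D n j * A j k) * x k)"
        if "\<forall>n. summable (\<lambda>k. A n k * x k)"
        using that by (simp add: summable_row_combination(1))
      show "\<forall>n. summable (\<lambda>k. A n k * x k)"
        if "\<forall>n. summable (\<lambda>k. (\<Sum>j\<le>n. D n j * A j k) * x k)"
      proof
        fix n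
        show "summable (\<lambda>k. A n k * x k)"
          by (rule summable_rows_of_triangle_factor[where D = D]) (use that assms in auto)
      qed
    qed
    moreover have "(\<lambda>n. \<Sum>j\<le>n. D n j * (\<Sum>k. A j k * x k)) = (\<lambda>n. \<Sum>k. (\<Sum>j\<le>n. D n j * A j k) * x k)"
      if "\<forall>n. summable (\<lambda>k. A n k * x k)"
      using that by (simp add: summable_row_combination(2))
    ultimately show ?thesis
      by auto
  qed
  show ?thesis
    unfolding mat_class_def mem_Collect_eq by (simp only: rowwise)
qed

lemma frac_coeff_0:
  assumes "\<alpha> > -1"
  shows "frac_coeff \<alpha> 0 = 1"
proof -
  have "Gamma (\<alpha> + 1) > 0"
    using assms by (intro Gamma_real_pos) simp
  then show ?thesis
    unfolding frac_coeff_def by simp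
qed

lemma sum_weighted_frac_diff:
  "(\<Sum>j\<le>n. u j * frac_diff \<alpha> y j) = (\<Sum>m\<le>n. (\<Sum>i\<le>n - m. of_real (frac_coeff \<alpha> i) * u (i + m)) * y m)"
  unfolding frac_diff_def by (rule sum_weighted_convolution_swap)

lemma gamma_domain_eq_triangle_domain:
  "gamma_domain \<mu> \<alpha> u =
     {y. (\<lambda>n. \<Sum>m\<le>n. (\<Sum>i\<le>n - m. of_real (frac_coeff \<alpha> i) * u (i + m)) * y m) \<in> \<mu>}"
  unfolding gamma_domain_def sum_weighted_frac_diff ..

theorem theorem5:
  fixes \<alpha> :: real
    and u :: "nat \<Rightarrow> 'a::real_normed_field"
    and lam :: "(nat \<Rightarrow> 'a) set"
    and \<mu> :: "(nat \<Rightarrow> 'a) set"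
    and A :: "nat \<Rightarrow> nat \<Rightarrow> 'a"
  assumes "0 < \<alpha>" and "\<alpha> < 1"
    and "\<forall>k. u k \<noteq> 0"
    and "\<mu> \<in> {null_seqs, conv_seqs}"
  shows "A \<in> mat_class lam (gamma_domain \<mu> \<alpha> u) \<longleftrightarrow>
         (\<lambda>n k. \<Sum>j\<le>n. (\<Sum>i\<le>n - j. of_real (frac_coeff \<alpha> i) * u (i + j)) * A j k)
           \<in> mat_class lam \<mu>"
proof -
  have "(\<Sum>i\<le>n - n. of_real (frac_coeff \<alpha> i) * u (i + n)) \<noteq> 0" for n
    using frac_coeff_0[of \<alpha>] assms(1,3) by simp
  then show ?thesis
    unfolding gamma_domain_eq_triangle_domain by (rule mat_class_triangle_domain_iff)
qed

end
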